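(* The relation $\{(\rho,\pi):\rho=[n]\text{ and }\pi=[n]!\text{ for some }n\ge1\}$ is $\Pi_2$-definable in $\mathbf Y^*=\langle\mathcal P,\le,[1]+[1]\rangle$.
   Context: $\mathcal P$ is the set of all integer partitions, including the empty partition; a partition is a nonincreasing finite sequence of positive integers (its parts). $[n]$ denotes the partition with a single part $n$. For $n\ge1$, the factorial partition $[n]!$ is the partition $(n,n-1,\dots,2,1)$ with parts $1,2,\dots,n$ each appearing exactly once. Young's lattice $\mathbf Y=\langle\mathcal P,\le\rangle$ has $(s_1,\dots,s_r)\le(n_1,\dots,n_t)$ iff $r\le t$ and $s_i\le n_i$ for all $i\le r$; $\mathbf Y^*$ is $\mathbf Y$ with a constant symbol for the partition $(1,1)$. A relation is $\Pi_n$-definable if it is defined by a first-order formula in the language $\{\le,(1,1)\}$ in prenex form with $n$ alternating quantifier blocks, the outermost universal, and a quantifier-free matrix. *)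

theory Defs
  imports Main
begin

definition is_partition :: "nat list \<Rightarrow> bool" where
  "is_partition xs \<longleftrightarrow> sorted_wrt (\<ge>) xs \<and> (\<forall>x\<in>set xs. 0 < x)"

definition young_le :: "nat list \<Rightarrow> nat list \<Rightarrow> bool" where
  "young_le s n \<longleftrightarrow> length s \<le> length n \<and> (\<forall>i<length s. s ! i \<le> n ! i)"

definition factorial_partition :: "nat \<Rightarrow> nat list" where
  "factorial_partition n = rev [1..<Suc n]"

datatype trm = Var nat | C11

datatype fm =
    Le trm trm
  | Eq trm trm
  | Neg fm
  | Conj fm fm
  | Disj fm fm
  | Ex nat fm
  | All nat fm

fun tval :: "(nat \<Rightarrow> nat list) \<Rightarrow> trm \<Rightarrow> nat list" where
  "tval e (Var i) = e i"
| "tval e C11 = [1, 1]"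

fun sat :: "(nat \<Rightarrow> nat list) \<Rightarrow> fm \<Rightarrow> bool" where
  "sat e (Le s t) = young_le (tval e s) (tval e t)"
| "sat e (Eq s t) = (tval e s = tval e t)"
| "sat e (Neg \<phi>) = (\<not> sat e \<phi>)"
| "sat e (Conj \<phi> \<psi>) = (sat e \<phi> \<and> sat e \<psi>)"
| "sat e (Disj \<phi> \<psi>) = (sat e \<phi> \<or> sat e \<psi>)"
| "sat e (Ex x \<phi>) = (\<exists>p. is_partition p \<and> sat (e(x := p)) \<phi>)"
| "sat e (All x \<phi>) = (\<forall>p. is_partition p \<longrightarrow> sat (e(x := p)) \<phi>)"

fun qfree :: "fm \<Rightarrow> bool" where
  "qfree (Le _ _) = True"
| "qfree (Eq _ _) = True"
| "qfree (Neg \<phi>) = qfree \<phi>"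
| "qfree (Conj \<phi> \<psi>) = (qfree \<phi> \<and> qfree \<psi>)"
| "qfree (Disj \<phi> \<psi>) = (qfree \<phi> \<and> qfree \<psi>)"
| "qfree (Ex _ _) = False"
| "qfree (All _ _) = False"

definition Alls :: "nat list \<Rightarrow> fm \<Rightarrow> fm" where
  "Alls xs \<phi> = foldr All xs \<phi>"

definition Exs :: "nat list \<Rightarrow> fm \<Rightarrow> fm" where
  "Exs xs \<phi> = foldr Ex xs \<phi>"

definition is_Pi2 :: "fm \<Rightarrow> bool" where
  "is_Pi2 \<phi> \<longleftrightarrow> (\<exists>xs ys \<psi>. qfree \<psi> \<and> \<phi> = Alls xs (Exs ys \<psi>))"

definition Pi2_definable :: "(nat list \<Rightarrow> nat list \<Rightarrow> bool) \<Rightarrow> bool" where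
  "Pi2_definable R \<longleftrightarrow> (\<exists>\<phi>. is_Pi2 \<phi> \<and>
     (\<forall>e. (\<forall>i. is_partition (e i)) \<longrightarrow> (sat e \<phi> \<longleftrightarrow> R (e 0) (e 1))))"

end

(*
  A partition \<pi> with first row n equals [n]! iff no interval [a, \<pi>] of Young's lattice is a
  three-element chain.  If a < b < [n]!, the skew shape [n]!/a has cells in two different rows
  (each row of [n]! is one cell longer than the next), and removing the corner of [n]! in either
  row gives two distinct partitions strictly between a and [n]!.  Conversely, if \<pi> is not a
  staircase, it has a row at least two cells longer than the next, or two equal rows followed by
  a shorter one; removing one and then a second cell there yields a < b < \<pi> with nothing else
  in [a, \<pi>].  The first row is pinned down by \<rho> = [n]: \<rho> is not above (1,1), not below every
  partition, below \<pi>, and above every one-row partition below \<pi>.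
*)
theory Submission
  imports Defs
begin

definition row :: "nat list \<Rightarrow> nat \<Rightarrow> nat" where
  "row p k = (if k < length p then p ! k else 0)"

lemma row_beyond: "length p \<le> k \<Longrightarrow> row p k = 0"
  by (simp add: row_def)

lemma row_pos: "is_partition p \<Longrightarrow> k < length p \<Longrightarrow> 0 < row p k"
  by (auto simp: row_def is_partition_def)

lemma row_antimono: "is_partition p \<Longrightarrow> i \<le> j \<Longrightarrow> row p j \<le> row p i"
  unfolding is_partition_def row_def by (auto simp: sorted_wrt_iff_nth_less le_less)

lemma young_le_iff_row_le:
  assumes "is_partition s"
  shows "young_le s t \<longleftrightarrow> (\<forall>k. row s k \<le> row t k)"
proof
  assume "\<forall>k. row s k \<le> row t k"
  moreover have "length s \<le> length t"
  proof (rule ccontr)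
    assume "\<not> length s \<le> length t"
    then have "row t (length t) < row s (length t)"
      using row_pos[OF assms] by (simp add: row_beyond)
    with \<open>\<forall>k. row s k \<le> row t k\<close> show False
      by (meson not_le)
  qed
  ultimately show "young_le s t"
    unfolding young_le_def by (metis (full_types) row_def less_le_trans)
qed (auto simp: young_le_def row_def)

lemma partition_eqI:
  assumes "is_partition s" "is_partition t" "row s = row t"
  shows "s = t"
proof -
  have "young_le s t" "young_le t s"
    using assms by (simp_all add: young_le_iff_row_le)
  then have "length s = length t" "\<forall>i<length s. s ! i = t ! i"
    by (auto simp: young_le_def intro: antisym)
  then show ?thesis
    by (simp add: nth_equalityI)
qed

lemma partition_of_row:
  assumes "antimono g" "g N = 0"
  shows "\<exists>p. is_partition p \<and> row p = g"
proof -
  define M where "M = (LEAST k. g k = 0)"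
  have "g M = 0"
    unfolding M_def by (rule LeastI[of _ N]) (fact assms(2))
  then have zero: "g k = 0" if "M \<le> k" for k
    using antimonoD[OF assms(1) that] by simp
  have pos: "0 < g k" if "k < M" for k
    using not_less_Least[of k "\<lambda>k. g k = 0"] that by (simp add: M_def)
  have "is_partition (map g [0..<M])"
    using assms(1) pos by (auto simp: is_partition_def sorted_wrt_iff_nth_less antimonoD)
  moreover have "row (map g [0..<M]) = g"
    by (auto simp: row_def fun_eq_iff zero)
  ultimately show ?thesis
    by blast
qed

lemma row_factorial_partition: "row (factorial_partition n) k = n - k"
  by (auto simp del: upt_Suc simp: factorial_partition_def row_def rev_nth)

lemma is_partition_factorial_partition: "is_partition (factorial_partition n)"
  by (auto simp del: upt_Suc simp: factorial_partition_def is_partition_def sorted_wrt_rev)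

lemma partition_remove_corner:
  assumes P: "is_partition P" and corner: "row P (Suc i) < row P i"
  shows "\<exists>Q. is_partition Q \<and> row Q = (row P)(i := row P i - 1)"
proof (rule partition_of_row)
  have "i < length P"
    using corner by (metis not_le not_less0 row_beyond)
  then show "((row P)(i := row P i - 1)) (length P) = 0"
    by (simp add: row_beyond)
  show "antimono ((row P)(i := row P i - 1))"
  proof (rule antimonoI)
    fix x y :: nat
    assume "x \<le> y"
    note anti = row_antimono[OF P]
    show "((row P)(i := row P i - 1)) y \<le> ((row P)(i := row P i - 1)) x"
    proof (cases "x = i")
      case True
      with \<open>x \<le> y\<close> corner anti[of "Suc i" y] show ?thesis
        by (cases "y = i") auto
    next
      case False
      with \<open>x \<le> y\<close> anti[of x y] anti[of x i] show ?thesis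
        by auto
    qed
  qed
qed

abbreviation young_less :: "nat list \<Rightarrow> nat list \<Rightarrow> bool" where
  "young_less s t \<equiv> young_le s t \<and> s \<noteq> t"

definition no_three_chain_below :: "nat list \<Rightarrow> bool" where
  "no_three_chain_below P \<longleftrightarrow>
     (\<forall>a b. is_partition a \<longrightarrow> is_partition b \<longrightarrow> young_less a b \<longrightarrow> young_less b P \<longrightarrow>
        (\<exists>c. is_partition c \<and> young_less a c \<and> young_less c P \<and> c \<noteq> b))"

lemma not_no_three_chain_belowI:
  assumes partitions: "is_partition a" "is_partition b" "is_partition P"
    and ab: "\<forall>k. row a k \<le> row b k" "row a \<noteq> row b"
    and bP: "\<forall>k. row b k \<le> row P k" "row b \<noteq> row P"
    and interval: "\<And>c. is_partition c \<Longrightarrow> \<forall>k. row a k \<le> row c k \<Longrightarrow> \<forall>k. row c k \<le> row P k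
                     \<Longrightarrow> row c \<in> {row a, row b, row P}"
  shows "\<not> no_three_chain_below P"
proof -
  have "c = a \<or> c = b \<or> c = P" if "is_partition c" "young_le a c" "young_le c P" for c
    using interval[of c] that partitions partition_eqI[OF that(1)]
    by (auto simp: young_le_iff_row_le)
  moreover have "young_less a b" "young_less b P"
    using partitions ab bP by (auto simp: young_le_iff_row_le)
  ultimately show ?thesis
    using partitions unfolding no_three_chain_below_def by blast
qed

lemma not_no_three_chain_below_long_step:
  assumes P: "is_partition P" and step: "row P (Suc i) + 2 \<le> row P i"
  shows "\<not> no_three_chain_below P"
proof -
  obtain b where b: "is_partition b" "row b = (row P)(i := row P i - 1)"
    using partition_remove_corner[OF P, of i] step by auto
  obtain a where a: "is_partition a" "row a = (row P)(i := row P i - 2)"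
    using partition_remove_corner[OF b(1), of i] step b(2) by fastforce
  show ?thesis
  proof (rule not_no_three_chain_belowI[OF a(1) b(1) P])
    fix c
    assume c: "is_partition c" "\<forall>k. row a k \<le> row c k" "\<forall>k. row c k \<le> row P k"
    then have off: "row c k = row P k" if "k \<noteq> i" for k
      using that a(2) by (metis fun_upd_other le_antisym)
    have "row P i - 2 \<le> row c i" "row c i \<le> row P i"
      using c(2,3)[rule_format, of i] a(2) by auto
    then consider "row c i = row P i - 2" | "row c i = row P i - 1" | "row c i = row P i"
      by linarith
    then show "row c \<in> {row a, row b, row P}"
    proof cases
      case 1
      then have "row c = row a"
        using off by (auto simp: fun_eq_iff a(2))
      then show ?thesis by simp
    next
      case 2
      then have "row c = row b"
        using off by (auto simp: fun_eq_iff b(2))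
      then show ?thesis by simp
    next
      case 3
      then have "row c = row P"
        using off by (metis ext)
      then show ?thesis by simp
    qed
  qed (use a(2) b(2) step in \<open>auto simp: fun_eq_iff\<close>)
qed

lemma not_no_three_chain_below_plateau:
  assumes P: "is_partition P"
    and plateau: "row P j = row P (Suc j)" and drop: "row P (Suc (Suc j)) < row P (Suc j)"
  shows "\<not> no_three_chain_below P"
proof -
  obtain b where b: "is_partition b" "row b = (row P)(Suc j := row P j - 1)"
    using partition_remove_corner[OF P drop] plateau by fastforce
  obtain a where a: "is_partition a" "row a = (row P)(j := row P j - 1, Suc j := row P j - 1)"
    using partition_remove_corner[OF b(1), of j] drop plateau b(2) by (fastforce simp: fun_upd_twist)
  show ?thesis
  proof (rule not_no_three_chain_belowI[OF a(1) b(1) P])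
    fix c
    assume c: "is_partition c" "\<forall>k. row a k \<le> row c k" "\<forall>k. row c k \<le> row P k"
    then have off: "row c k = row P k" if "k \<noteq> j" "k \<noteq> Suc j" for k
      using that a(2) by (metis fun_upd_other le_antisym)
    have "row P j - 1 \<le> row c j" "row c j \<le> row P j"
      "row P j - 1 \<le> row c (Suc j)" "row c (Suc j) \<le> row P j"
      using c(2,3)[rule_format, of j] c(2,3)[rule_format, of "Suc j"] a(2) plateau by auto
    moreover have "row c (Suc j) \<le> row c j"
      using row_antimono[OF c(1)] by simp
    ultimately consider
        "row c j = row P j - 1" "row c (Suc j) = row P j - 1"
      | "row c j = row P j" "row c (Suc j) = row P j - 1"
      | "row c j = row P j" "row c (Suc j) = row P j"
      by linarith
    then show "row c \<in> {row a, row b, row P}"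
    proof cases
      case 1
      then have "row c = row a"
        using off by (auto simp: fun_eq_iff a(2))
      then show ?thesis by simp
    next
      case 2
      then have "row c = row b"
        using off plateau by (metis b(2) fun_upd_apply ext)
      then show ?thesis by simp
    next
      case 3
      then have "row c = row P"
        using off plateau by (metis ext)
      then show ?thesis by simp
    qed
  qed (use a(2) b(2) plateau drop in \<open>auto simp: fun_eq_iff\<close>)
qed

lemma factorial_partition_if_unit_steps:
  assumes P: "is_partition P" and top: "row P 0 = n"
    and short_steps: "\<And>i. row P i \<le> Suc (row P (Suc i))"
    and no_plateau: "\<And>j. row P j = row P (Suc j) \<Longrightarrow> row P (Suc j) \<le> row P (Suc (Suc j))"
  shows "P = factorial_partition n"
proof -
  note anti = row_antimono[OF P]
  have plateau_empty: "row P j = 0" if "row P j = row P (Suc j)" for j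
  proof -
    have "row P (j + m) = row P j \<and> row P (Suc (j + m)) = row P j" for m
    proof (induction m)
      case (Suc m)
      with no_plateau[of "j + m"] anti[of "Suc (j + m)" "Suc (Suc (j + m))"] show ?case
        by simp
    qed (use that in simp)
    from this[of "length P"] show ?thesis
      by (simp add: row_beyond)
  qed
  have "row P (Suc i) = row P i - 1" for i
    using short_steps[of i] anti[of i "Suc i"] plateau_empty[of i] by linarith
  then have "row P k = n - k" for k
    by (induction k) (simp_all add: top)
  then show ?thesis
    by (intro partition_eqI P is_partition_factorial_partition) (simp add: fun_eq_iff row_factorial_partition)
qed

lemma factorial_partition_if_no_three_chain_below:
  assumes "is_partition P" "row P 0 = n" "no_three_chain_below P"
  shows "P = factorial_partition n"
proof (rule factorial_partition_if_unit_steps)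
  show "row P i \<le> Suc (row P (Suc i))" for i
    using not_no_three_chain_below_long_step[of P i] assms by linarith
  show "row P (Suc j) \<le> row P (Suc (Suc j))" if "row P j = row P (Suc j)" for j
    using not_no_three_chain_below_plateau[of P j] that assms by linarith
qed (use assms in auto)

lemma factorial_partition_remove_corner:
  assumes "j < n"
  shows "\<exists>c. is_partition c \<and> row c = (\<lambda>k. n - k)(j := n - j - 1)"
proof -
  have "row (factorial_partition n) = (\<lambda>k. n - k)"
    by (simp add: fun_eq_iff row_factorial_partition)
  moreover have "row (factorial_partition n) (Suc j) < row (factorial_partition n) j"
    using assms by (simp add: row_factorial_partition)
  ultimately show ?thesis
    using partition_remove_corner[OF is_partition_factorial_partition] by metis
qed

lemma factorial_partition_skew_two_rows:
  assumes a: "is_partition a" and b: "is_partition b"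
    and ab: "young_less a b" and bF: "young_less b (factorial_partition n)"
  shows "\<exists>j m. j \<noteq> m \<and> row a j < n - j \<and> row a m < n - m"
proof (rule ccontr)
  assume single: "\<not> ?thesis"
  have ab_rows: "row a k \<le> row b k" and bF_rows: "row b k \<le> n - k" for k
    using ab bF a b by (simp_all add: young_le_iff_row_le row_factorial_partition)
  obtain k where "row a k \<noteq> row b k"
    using ab partition_eqI[OF a b] by blast
  with ab_rows[of k] bF_rows[of k] have "row a k < row b k" "row b k \<le> n - k"
    by auto
  obtain k' where "row b k' \<noteq> n - k'"
    using bF partition_eqI[OF b is_partition_factorial_partition]
    by (auto simp: fun_eq_iff row_factorial_partition)
  with ab_rows[of k'] bF_rows[of k'] have "row a k' < n - k'" "row b k' < n - k'"
    by (auto simp: le_less_trans)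
  moreover have "\<not> row a (Suc k) < n - Suc k"
    using single \<open>row a k < row b k\<close> \<open>row b k \<le> n - k\<close> by (metis n_not_Suc_n order.strict_trans2)
  ultimately have "k' = k"
    using single \<open>row a k < row b k\<close> \<open>row b k \<le> n - k\<close> by (metis order.strict_trans2)
  moreover have "row a (Suc k) \<le> row a k"
    using row_antimono[OF a] by simp
  ultimately show False
    using \<open>row a k < row b k\<close> \<open>row b k' < n - k'\<close> \<open>\<not> row a (Suc k) < n - Suc k\<close> by arith
qed

lemma no_three_chain_below_factorial_partition:
  "no_three_chain_below (factorial_partition n)"
  unfolding no_three_chain_below_def
proof (intro allI impI)
  let ?F = "factorial_partition n"
  fix a b
  assume a: "is_partition a" and b: "is_partition b"
    and ab: "young_less a b" and bF: "young_less b ?F"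
  have aF_rows: "row a k \<le> n - k" for k
    using ab bF a b by (force simp: young_le_iff_row_le row_factorial_partition intro: le_trans)
  have remove: "\<exists>c. is_partition c \<and> young_less a c \<and> young_less c ?F \<and>
      row c = (\<lambda>k. n - k)(j := n - j - 1)"
    if "j \<noteq> m" and defect: "row a j < n - j" "row a m < n - m" for j m
  proof -
    have "j < n"
      using defect(1) by simp
    then obtain c where c: "is_partition c" "row c = (\<lambda>k. n - k)(j := n - j - 1)"
      using factorial_partition_remove_corner by blast
    have "young_le a c" "young_le c ?F"
      using c a aF_rows defect(1) by (auto simp: young_le_iff_row_le row_factorial_partition)
    moreover have "row a m \<noteq> row c m" "row c j \<noteq> row ?F j"
      using c(2) \<open>j \<noteq> m\<close> defect by (auto simp: row_factorial_partition)
    ultimately show ?thesis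
      using c by auto
  qed
  obtain j m where "j \<noteq> m" "row a j < n - j" "row a m < n - m"
    using factorial_partition_skew_two_rows[OF a b ab bF] by blast
  then obtain c1 c2 where "is_partition c1" "young_less a c1" "young_less c1 ?F"
      and "is_partition c2" "young_less a c2" "young_less c2 ?F"
      and "row c1 j \<noteq> row c2 j"
    using remove[of j m] remove[of m j] by auto
  then show "\<exists>c. is_partition c \<and> young_less a c \<and> young_less c ?F \<and> c \<noteq> b"
    by blast
qed

lemma young_le_two_rows_iff:
  assumes "is_partition r"
  shows "young_le [1, 1] r \<longleftrightarrow> 2 \<le> length r"
proof
  assume "2 \<le> length r"
  then have "0 < length r" "1 < length r"
    by linarith+
  then have "0 < r ! 0" "0 < r ! 1"
    using row_pos[OF assms, of 0] row_pos[OF assms, of 1] by (simp_all add: row_def)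
  with \<open>2 \<le> length r\<close> show "young_le [1, 1] r"
    by (auto simp: young_le_def less_Suc_eq)
qed (simp add: young_le_def)

lemma one_row_iff:
  assumes "is_partition r"
  shows "\<not> young_le [1, 1] r \<and> (\<exists>z. is_partition z \<and> \<not> young_le r z) \<longleftrightarrow> (\<exists>n\<ge>1. r = [n])"
proof
  assume "\<not> young_le [1, 1] r \<and> (\<exists>z. is_partition z \<and> \<not> young_le r z)"
  then have "length r \<le> 1" "r \<noteq> []"
    using young_le_two_rows_iff[OF assms] by (auto simp: young_le_def)
  then obtain n where "r = [n]"
    by (cases r) auto
  with assms show "\<exists>n\<ge>1. r = [n]"
    by (auto simp: is_partition_def)
next
  assume "\<exists>n\<ge>1. r = [n]"
  moreover have "is_partition []"
    by (simp add: is_partition_def)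
  ultimately show "\<not> young_le [1, 1] r \<and> (\<exists>z. is_partition z \<and> \<not> young_le r z)"
    by (auto simp: young_le_def)
qed

lemma first_row_iff:
  assumes "1 \<le> n" "is_partition p"
  shows "young_le [n] p \<and>
      (\<forall>y. is_partition y \<longrightarrow> young_le [1, 1] y \<or> \<not> young_le y p \<or> young_le y [n])
    \<longleftrightarrow> row p 0 = n"
proof -
  have one_row_le: "young_le [m] q \<longleftrightarrow> m \<le> row q 0" if "1 \<le> m" for m q
    using that by (cases q) (auto simp: young_le_def row_def)
  have "row p 0 \<le> n" if "n \<le> row p 0"
    and below: "\<forall>y. is_partition y \<longrightarrow> young_le [1, 1] y \<or> \<not> young_le y p \<or> young_le y [n]"
  proof -
    have "is_partition [row p 0]"
      using that assms(1) by (simp add: is_partition_def)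
    moreover have "young_le [row p 0] p"
      using one_row_le that(1) assms(1) by simp
    moreover have "\<not> young_le [1, 1] [row p 0]"
      by (simp add: young_le_def)
    ultimately have "young_le [row p 0] [n]"
      using below by blast
    then show ?thesis
      by (simp add: young_le_def)
  qed
  moreover have "young_le y [n]"
    if "row p 0 = n" "is_partition y" "\<not> young_le [1, 1] y" "young_le y p" for y
  proof -
    have "length y \<le> 1"
      using that(3) young_le_two_rows_iff[OF that(2)] by simp
    moreover have "y ! i \<le> [n] ! i" if "i < length y" for i
    proof -
      have "i = 0"
        using that \<open>length y \<le> 1\<close> by simp
      with that \<open>young_le y p\<close> \<open>row p 0 = n\<close> show ?thesis
        by (auto simp: young_le_def row_def)
    qed
    ultimately show ?thesis
      by (simp add: young_le_def)
  qed
  ultimately show ?thesis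
    using one_row_le[OF assms(1)] by fastforce
qed

definition less_fm :: "nat \<Rightarrow> nat \<Rightarrow> fm" where
  "less_fm x y = Conj (Le (Var x) (Var y)) (Neg (Eq (Var x) (Var y)))"

text \<open>Variables: \<open>\<rho>, \<pi>\<close> are 0, 1; the universal \<open>y, a, b\<close> are 2, 3, 4; the existential
  \<open>z, c\<close> are 5, 6.\<close>
definition staircase_matrix :: fm where
  "staircase_matrix =
    Conj (Neg (Le C11 (Var 0)))
    (Conj (Neg (Le (Var 0) (Var 5)))
    (Conj (Le (Var 0) (Var 1))
    (Conj (Disj (Le C11 (Var 2)) (Disj (Neg (Le (Var 2) (Var 1))) (Le (Var 2) (Var 0))))
      (Disj (Neg (Conj (less_fm 3 4) (less_fm 4 1)))
        (Conj (less_fm 3 6) (Conj (less_fm 6 1) (Neg (Eq (Var 6) (Var 4)))))))))"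

definition staircase_formula :: fm where
  "staircase_formula = Alls [2, 3, 4] (Exs [5, 6] staircase_matrix)"

lemma is_Pi2_staircase_formula: "is_Pi2 staircase_formula"
proof -
  have "qfree staircase_matrix"
    by (simp add: staircase_matrix_def less_fm_def)
  then show ?thesis
    unfolding is_Pi2_def staircase_formula_def by blast
qed

lemma sat_staircase_formula:
  "sat e staircase_formula \<longleftrightarrow>
     (\<not> young_le [1, 1] (e 0) \<and> (\<exists>z. is_partition z \<and> \<not> young_le (e 0) z)) \<and>
     young_le (e 0) (e 1) \<and>
     (\<forall>y. is_partition y \<longrightarrow> young_le [1, 1] y \<or> \<not> young_le y (e 1) \<or> young_le y (e 0)) \<and>
     no_three_chain_below (e 1)"
proof -
  have "is_partition []"
    by (simp add: is_partition_def)
  then show ?thesis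
    unfolding staircase_formula_def staircase_matrix_def less_fm_def no_three_chain_below_def
    by (simp add: Alls_def Exs_def) blast
qed

lemma sat_staircase_formula_iff:
  assumes \<rho>: "is_partition (e 0)" and \<pi>: "is_partition (e 1)"
  shows "sat e staircase_formula \<longleftrightarrow>
    (\<exists>n\<ge>1. e 0 = [n] \<and> row (e 1) 0 = n \<and> no_three_chain_below (e 1))"
proof
  assume "sat e staircase_formula"
  then obtain n where "1 \<le> n" "e 0 = [n]" "young_le [n] (e 1)"
    "\<forall>y. is_partition y \<longrightarrow> young_le [1, 1] y \<or> \<not> young_le y (e 1) \<or> young_le y [n]"
    "no_three_chain_below (e 1)"
    unfolding sat_staircase_formula one_row_iff[OF \<rho>] by auto
  then show "\<exists>n\<ge>1. e 0 = [n] \<and> row (e 1) 0 = n \<and> no_three_chain_below (e 1)"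
    using first_row_iff[OF _ \<pi>] by blast
next
  assume "\<exists>n\<ge>1. e 0 = [n] \<and> row (e 1) 0 = n \<and> no_three_chain_below (e 1)"
  then obtain n where "1 \<le> n" "e 0 = [n]" "row (e 1) 0 = n" "no_three_chain_below (e 1)"
    by blast
  moreover note first_row_iff[OF \<open>1 \<le> n\<close> \<pi>]
  ultimately show "sat e staircase_formula"
    unfolding sat_staircase_formula one_row_iff[OF \<rho>] by auto
qed

theorem proposition3p8:
  shows "Pi2_definable (\<lambda>\<rho> \<pi>. \<exists>n\<ge>1. \<rho> = [n] \<and> \<pi> = factorial_partition n)"
  unfolding Pi2_definable_def
proof (intro exI conjI allI impI)
  show "is_Pi2 staircase_formula"
    by (rule is_Pi2_staircase_formula)
  fix e :: "nat \<Rightarrow> nat list"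
  assume "\<forall>i. is_partition (e i)"
  then have \<rho>: "is_partition (e 0)" and \<pi>: "is_partition (e 1)"
    by auto
  show "sat e staircase_formula \<longleftrightarrow> (\<exists>n\<ge>1. e 0 = [n] \<and> e 1 = factorial_partition n)"
    unfolding sat_staircase_formula_iff[OF \<rho> \<pi>]
    using factorial_partition_if_no_three_chain_below[OF \<pi>] no_three_chain_below_factorial_partition
    by (auto simp: row_factorial_partition)
qed

end
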